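(* Let $F:\mathbb{R}^n\rightrightarrows\mathbb{R}^p$ be a nearly convex set-valued mapping and $\Theta\subset\mathbb{R}^p$ a nearly convex set such that $\operatorname{ri}(\operatorname{rge} F)\cap\operatorname{ri}\Theta\neq\emptyset$. Define $F_0(x)=\operatorname{ri} F(x)$ for $x\in\mathbb{R}^n$. Then $$\operatorname{ri}\big(F^{-1}(\Theta)\big)=\operatorname{ri}(\operatorname{dom} F)\cap F_0^{-1}(\operatorname{ri}\Theta),$$ i.e. $\operatorname{ri}(F^{-1}(\Theta))=\{x\in\operatorname{ri}(\operatorname{dom} F):\operatorname{ri}F(x)\cap\operatorname{ri}\Theta\neq\emptyset\}$.
   Context: A set $\Omega\subset\mathbb{R}^k$ is nearly convex if there is a convex set $C$ with $C\subset\Omega\subset\overline{C}$. For an arbitrary set $\Omega$, $\operatorname{ri}\Omega=\{a\in\Omega:\exists\delta>0,\ B(a;\delta)\cap\operatorname{aff}\Omega\subset\Omega\}$. For $F:\mathbb{R}^n\rightrightarrows\mathbb{R}^p$: $\operatorname{dom} F=\{x:F(x)\neq\emptyset\}$, $\operatorname{rge} F=\bigcup_x F(x)$, $\operatorname{gph} F=\{(x,y):y\in F(x)\}$; $F$ is nearly convex if $\operatorname{gph} F$ is nearly convex. For $\Theta\subset\mathbb{R}^p$, $F^{-1}(\Theta)=\{x\in\mathbb{R}^n:F(x)\cap\Theta\neq\emptyset\}$. *)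

theory Defs
  imports "HOL-Analysis.Analysis"
begin

definition nearly_convex :: "'a::real_normed_vector set \<Rightarrow> bool" where
  "nearly_convex \<Omega> \<longleftrightarrow> (\<exists>C. convex C \<and> C \<subseteq> \<Omega> \<and> \<Omega> \<subseteq> closure C)"

definition sv_dom :: "('a \<Rightarrow> 'b set) \<Rightarrow> 'a set" where
  "sv_dom F = {x. F x \<noteq> {}}"

definition sv_rge :: "('a \<Rightarrow> 'b set) \<Rightarrow> 'b set" where
  "sv_rge F = (\<Union>x. F x)"

definition sv_gph :: "('a \<Rightarrow> 'b set) \<Rightarrow> ('a \<times> 'b) set" where
  "sv_gph F = {(x, y). y \<in> F x}"

definition nearly_convex_map :: "('a::real_normed_vector \<Rightarrow> 'b::real_normed_vector set) \<Rightarrow> bool" where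
  "nearly_convex_map F \<longleftrightarrow> nearly_convex (sv_gph F)"

definition sv_preimage :: "('a \<Rightarrow> 'b set) \<Rightarrow> 'b set \<Rightarrow> 'a set" where
  "sv_preimage F \<Theta> = {x. F x \<inter> \<Theta> \<noteq> {}}"

end

theory Submission
  imports Defs
begin

text \<open>
  A nearly convex set S lies between the convex set ri S and its closure, and a convex set has the
  same relative interior as its closure; hence the relative-interior rules for convex sets
  (linear images, intersections, products, fibres over a projection) carry over to nearly convex
  sets. The preimage of \<Theta> under F is the first projection of gph F \<inter> (UNIV \<times> \<Theta>); the
  qualification condition says exactly that the relative interiors of these two nearly convex
  sets meet, and the fibre of gph F over x is F x.
\<close>

lemma rel_interior_eq_between_closure:
  fixes C S :: "'a::euclidean_space set"
  assumes "convex C" "C \<subseteq> S" "S \<subseteq> closure C"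
  shows "rel_interior S = rel_interior C"
proof -
  have "affine hull C \<subseteq> affine hull S" using assms(2) by (rule hull_mono)
  moreover have "affine hull S \<subseteq> affine hull (closure C)" using assms(3) by (rule hull_mono)
  ultimately have hull_eq: "affine hull S = affine hull C" by simp
  have "rel_interior C \<subseteq> rel_interior S"
    using subset_rel_interior[OF assms(2)] hull_eq by simp
  moreover have "rel_interior S \<subseteq> rel_interior (closure C)"
    using subset_rel_interior[OF assms(3)] hull_eq by simp
  ultimately show ?thesis using convex_rel_interior_closure[OF assms(1)] by blast
qed

lemma convex_imp_nearly_convex: "convex S \<Longrightarrow> nearly_convex S"
  unfolding nearly_convex_def using closure_subset by blast

lemma nearly_convex_rel_interior:
  fixes S :: "'a::euclidean_space set"
  assumes "nearly_convex S"
  shows "convex (rel_interior S)" "S \<subseteq> closure (rel_interior S)"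
    "rel_interior (rel_interior S) = rel_interior S"
proof -
  obtain C where C: "convex C" "C \<subseteq> S" "S \<subseteq> closure C"
    using assms unfolding nearly_convex_def by blast
  have ri_S: "rel_interior S = rel_interior C"
    using rel_interior_eq_between_closure[OF C] .
  show "convex (rel_interior S)" using ri_S convex_rel_interior[OF C(1)] by simp
  show "S \<subseteq> closure (rel_interior S)" using ri_S C(3) convex_closure_rel_interior[OF C(1)] by simp
  show "rel_interior (rel_interior S) = rel_interior S"
    using ri_S rel_interior_rel_interior[OF C(1)] by simp
qed

lemma nearly_convex_iff_rel_interior:
  fixes S :: "'a::euclidean_space set"
  shows "nearly_convex S \<longleftrightarrow> convex (rel_interior S) \<and> S \<subseteq> closure (rel_interior S)"
proof
  assume "nearly_convex S"
  then show "convex (rel_interior S) \<and> S \<subseteq> closure (rel_interior S)"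
    using nearly_convex_rel_interior by blast
next
  assume "convex (rel_interior S) \<and> S \<subseteq> closure (rel_interior S)"
  then show "nearly_convex S"
    unfolding nearly_convex_def using rel_interior_subset by (intro exI[of _ "rel_interior S"]) blast
qed

lemma rel_interior_linear_image_nearly_convex:
  fixes f :: "'a::euclidean_space \<Rightarrow> 'b::euclidean_space"
  assumes "linear f" "nearly_convex S"
  shows "rel_interior (f ` S) = f ` rel_interior S"
proof -
  note ri = nearly_convex_rel_interior[OF assms(2)]
  have "f ` S \<subseteq> f ` closure (rel_interior S)" using ri(2) by blast
  also have "\<dots> \<subseteq> closure (f ` rel_interior S)" by (rule closure_linear_image_subset[OF assms(1)])
  finally have "rel_interior (f ` S) = rel_interior (f ` rel_interior S)"
    by (intro rel_interior_eq_between_closure convex_linear_image[OF assms(1) ri(1)]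
        image_mono rel_interior_subset)
  also have "\<dots> = f ` rel_interior S"
    using rel_interior_convex_linear_image[OF assms(1) ri(1)] ri(3) by simp
  finally show ?thesis .
qed

lemma nearly_convex_Int:
  fixes S T :: "'a::euclidean_space set"
  assumes "nearly_convex S" "nearly_convex T" "rel_interior S \<inter> rel_interior T \<noteq> {}"
  shows "nearly_convex (S \<inter> T)" "rel_interior (S \<inter> T) = rel_interior S \<inter> rel_interior T"
proof -
  note riS = nearly_convex_rel_interior[OF assms(1)]
  note riT = nearly_convex_rel_interior[OF assms(2)]
  have convex_Int: "convex (rel_interior S \<inter> rel_interior T)" using riS(1) riT(1) by (rule convex_Int)
  have "closure (rel_interior S) \<inter> closure (rel_interior T)
          \<subseteq> closure (rel_interior S \<inter> rel_interior T)"
    using convex_closure_rel_interior_Int[of "{rel_interior S, rel_interior T}"]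
      riS(1,3) riT(1,3) assms(3) by auto
  then have between: "rel_interior S \<inter> rel_interior T \<subseteq> S \<inter> T"
      "S \<inter> T \<subseteq> closure (rel_interior S \<inter> rel_interior T)"
    using riS(2) riT(2) rel_interior_subset by blast+
  have "rel_interior (S \<inter> T) = rel_interior (rel_interior S \<inter> rel_interior T)"
    using rel_interior_eq_between_closure[OF convex_Int between] .
  also have "\<dots> = rel_interior S \<inter> rel_interior T"
    using convex_rel_interior_inter_two[OF riS(1) riT(1)] riS(3) riT(3) assms(3) by simp
  finally show ri_Int: "rel_interior (S \<inter> T) = rel_interior S \<inter> rel_interior T" .
  show "nearly_convex (S \<inter> T)"
    unfolding nearly_convex_iff_rel_interior ri_Int using convex_Int between(2) by blast
qed

lemma nearly_convex_Times:
  fixes S :: "'a::euclidean_space set" and T :: "'b::euclidean_space set"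
  assumes "nearly_convex S" "nearly_convex T"
  shows "nearly_convex (S \<times> T)" "rel_interior (S \<times> T) = rel_interior S \<times> rel_interior T"
proof -
  note riS = nearly_convex_rel_interior[OF assms(1)]
  note riT = nearly_convex_rel_interior[OF assms(2)]
  have convex_Times: "convex (rel_interior S \<times> rel_interior T)"
    using riS(1) riT(1) by (rule convex_Times)
  have between: "rel_interior S \<times> rel_interior T \<subseteq> S \<times> T"
      "S \<times> T \<subseteq> closure (rel_interior S \<times> rel_interior T)"
    using riS(2) riT(2) by (auto simp: closure_Times intro: rel_interior_subset[THEN subsetD])
  have "rel_interior (S \<times> T) = rel_interior (rel_interior S \<times> rel_interior T)"
    using rel_interior_eq_between_closure[OF convex_Times between] .
  also have "\<dots> = rel_interior S \<times> rel_interior T"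
    using rel_interior_Times[OF riS(1) riT(1)] riS(3) riT(3) by simp
  finally show ri_Times: "rel_interior (S \<times> T) = rel_interior S \<times> rel_interior T" .
  show "nearly_convex (S \<times> T)"
    unfolding nearly_convex_iff_rel_interior ri_Times using convex_Times between(2) by blast
qed

lemma convex_fibre:
  fixes S :: "('a::real_vector \<times> 'b::real_vector) set"
  assumes "convex S"
  shows "convex {y. (x, y) \<in> S}"
  unfolding convex_def
proof clarify
  fix a b :: 'b and u v :: real
  assume "(x, a) \<in> S" "(x, b) \<in> S" "0 \<le> u" "0 \<le> v" "u + v = 1"
  then have "u *\<^sub>R (x, a) + v *\<^sub>R (x, b) \<in> S" using assms unfolding convex_def by blast
  moreover have "u *\<^sub>R (x, a) + v *\<^sub>R (x, b) = (x, u *\<^sub>R a + v *\<^sub>R b)"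
    using \<open>u + v = 1\<close> by (simp add: scaleR_left_distrib[symmetric])
  ultimately show "(x, u *\<^sub>R a + v *\<^sub>R b) \<in> S" by simp
qed

lemma rel_interior_fibre_projection:
  fixes S :: "('a::euclidean_space \<times> 'b::euclidean_space) set"
  assumes "convex S"
  shows "(x, y) \<in> rel_interior S
           \<longleftrightarrow> x \<in> fst ` rel_interior S \<and> y \<in> rel_interior {y. (x, y) \<in> S}"
proof -
  have "{x. {y. (x, y) \<in> S} \<noteq> {}} = fst ` S" by force
  then show ?thesis
    using rel_interior_projection[OF assms refl, of x y]
      rel_interior_convex_linear_image[OF linear_fst assms]
    by simp
qed

lemma rel_interior_fibre_between_closure:
  fixes C S :: "('a::euclidean_space \<times> 'b::euclidean_space) set"
  assumes "convex C" "C \<subseteq> S" "S \<subseteq> closure C" "x \<in> fst ` rel_interior C"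
  shows "rel_interior {y. (x, y) \<in> S} = rel_interior {y. (x, y) \<in> C}"
proof (rule rel_interior_eq_between_closure)
  have convex_closure_C: "convex (closure C)" using assms(1) by (rule convex_closure)
  have ri_closure: "rel_interior (closure C) = rel_interior C"
    using assms(1) by (rule convex_rel_interior_closure)
  show convex_fibre_C: "convex {y. (x, y) \<in> C}" using assms(1) by (rule convex_fibre)
  show "{y. (x, y) \<in> C} \<subseteq> {y. (x, y) \<in> S}" using assms(2) by blast
  have ri_fibres: "rel_interior {y. (x, y) \<in> closure C} = rel_interior {y. (x, y) \<in> C}"
    using rel_interior_fibre_projection[OF assms(1), of x]
      rel_interior_fibre_projection[OF convex_closure_C, of x] ri_closure assms(4)
    by (intro set_eqI) simp
  have "{y. (x, y) \<in> S} \<subseteq> {y. (x, y) \<in> closure C}" using assms(3) by blast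
  also have "\<dots> \<subseteq> closure (rel_interior {y. (x, y) \<in> closure C})"
    unfolding convex_closure_rel_interior[OF convex_fibre[OF convex_closure_C]] by (rule closure_subset)
  also have "\<dots> = closure {y. (x, y) \<in> C}"
    unfolding ri_fibres by (rule convex_closure_rel_interior[OF convex_fibre_C])
  finally show "{y. (x, y) \<in> S} \<subseteq> closure {y. (x, y) \<in> C}" .
qed

lemma rel_interior_projection_nearly_convex:
  fixes S :: "('a::euclidean_space \<times> 'b::euclidean_space) set"
  assumes "nearly_convex S"
  shows "(x, y) \<in> rel_interior S
           \<longleftrightarrow> x \<in> rel_interior (fst ` S) \<and> y \<in> rel_interior {y. (x, y) \<in> S}"
proof -
  note ri = nearly_convex_rel_interior[OF assms]
  have fibre: "rel_interior {y. (x, y) \<in> S} = rel_interior {y. (x, y) \<in> rel_interior S}"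
    if "x \<in> fst ` rel_interior S"
    using rel_interior_fibre_between_closure[OF ri(1) rel_interior_subset ri(2)] that
    unfolding ri(3) .
  have "(x, y) \<in> rel_interior S \<longleftrightarrow>
      x \<in> fst ` rel_interior S \<and> y \<in> rel_interior {y. (x, y) \<in> rel_interior S}"
    using rel_interior_fibre_projection[OF ri(1), of x y] unfolding ri(3) .
  also have "\<dots> \<longleftrightarrow> x \<in> fst ` rel_interior S \<and> y \<in> rel_interior {y. (x, y) \<in> S}"
    using fibre by blast
  finally show ?thesis
    unfolding rel_interior_linear_image_nearly_convex[OF linear_fst assms] .
qed

theorem theorem3p3:
  fixes F :: "'a::euclidean_space \<Rightarrow> 'b::euclidean_space set" and \<Theta> :: "'b set"
  assumes "nearly_convex_map F"
    and "nearly_convex \<Theta>"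
    and "rel_interior (sv_rge F) \<inter> rel_interior \<Theta> \<noteq> {}"
  shows "rel_interior (sv_preimage F \<Theta>)
           = rel_interior (sv_dom F) \<inter> sv_preimage (\<lambda>x. rel_interior (F x)) (rel_interior \<Theta>)"
proof -
  let ?G = "sv_gph F" and ?H = "(UNIV :: 'a set) \<times> \<Theta>"
  have G: "nearly_convex ?G" using assms(1) unfolding nearly_convex_map_def .
  note H = nearly_convex_Times[OF convex_imp_nearly_convex[OF convex_UNIV] assms(2),
      unfolded rel_interior_UNIV]
  have rge: "sv_rge F = snd ` ?G" and dom: "sv_dom F = fst ` ?G"
    and preimage: "sv_preimage F \<Theta> = fst ` (?G \<inter> ?H)"
    unfolding sv_rge_def sv_dom_def sv_preimage_def sv_gph_def by force+
  have fibre: "{y. (x, y) \<in> ?G} = F x" for x unfolding sv_gph_def by simp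
  have "rel_interior (sv_rge F) = snd ` rel_interior ?G"
    unfolding rge by (rule rel_interior_linear_image_nearly_convex[OF linear_snd G])
  then have "rel_interior ?G \<inter> rel_interior ?H \<noteq> {}" using assms(3) H(2) by force
  note GH = nearly_convex_Int[OF G H(1) this]
  have "rel_interior (sv_preimage F \<Theta>) = fst ` (rel_interior ?G \<inter> UNIV \<times> rel_interior \<Theta>)"
    unfolding preimage rel_interior_linear_image_nearly_convex[OF linear_fst GH(1)] GH(2) H(2) ..
  also have "\<dots> = rel_interior (sv_dom F) \<inter> sv_preimage (\<lambda>x. rel_interior (F x)) (rel_interior \<Theta>)"
  proof (rule set_eqI)
    fix x
    show "x \<in> fst ` (rel_interior ?G \<inter> UNIV \<times> rel_interior \<Theta>) \<longleftrightarrow>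
        x \<in> rel_interior (sv_dom F) \<inter> sv_preimage (\<lambda>x. rel_interior (F x)) (rel_interior \<Theta>)"
      using rel_interior_projection_nearly_convex[OF G, of x] unfolding dom fibre sv_preimage_def
      by force
  qed
  finally show ?thesis .
qed

end
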